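(* For every $n\geq 0$, $$S_1(n)=10^{n},\qquad S_2(n)=\frac{35\cdot 36^{n}-2\cdot 3^{n}}{33},\qquad S_3(n)=\frac{25\cdot 136^{n}-4\cdot 10^{n}}{21}.$$
   Context: The Stern polynomials $B_n(t)\in\mathbb{Z}[t]$ are defined by $B_0(t)=0$, $B_1(t)=1$, and for $n\geq 1$: $B_{2n}(t)=tB_n(t)$, $B_{2n+1}(t)=B_n(t)+B_{n+1}(t)$. For $n\geq1$ let $e(n)=\deg B_n(t)$. For $k,n\geq 0$ let $S_k(n)=\sum_{a\geq 1:\;e(a)=n}a^{k}$ (a finite sum over the positive integers $a$ with $e(a)=n$). *)

theory Defs
  imports "HOL-Computational_Algebra.Polynomial"
begin

function stern_poly :: "nat \<Rightarrow> int poly" where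
  "stern_poly n =
     (if n = 0 then 0
      else if n = 1 then 1
      else if even n then monom 1 1 * stern_poly (n div 2)
      else stern_poly (n div 2) + stern_poly (n div 2 + 1))"
  by auto
termination
  by (relation "measure id") (auto elim!: oddE)

definition stern_e :: "nat \<Rightarrow> nat" where
  "stern_e a = degree (stern_poly a)"

definition stern_S :: "nat \<Rightarrow> nat \<Rightarrow> nat" where
  "stern_S k n = (\<Sum>a\<in>{a. a \<ge> 1 \<and> stern_e a = n}. a ^ k)"

end

theory Submission
  imports Defs
begin

(* Write B_n for stern_poly n and e(n) for its degree.
   1. All B_n have nonnegative coefficients and B_n \<noteq> 0 for n \<ge> 1, so degrees add
      without cancellation: e(2a) = e(a) + 1 and e(2a+1) = max (e a) (e (a+1)).
   2. Consecutive values of e differ by at most one; hence e(4a-1) = e(4a+1) = e(a) + 1.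
   3. Consequently the level set L_n = {a \<ge> 1. e a = n} satisfies L_0 = {1} and
      L_(n+1) is the disjoint union of the images of L_n under a \<mapsto> 2a, 4a-1, 4a+1.
   4. For any f, the sum of f over L_(n+1) is therefore the sum over L_n of
      f(2a) + f(4a-1) + f(4a+1).  With f(x) = x^k and binomial expansion this yields
      the recurrences T_0(n+1) = 3 T_0(n), T_1(n+1) = 10 T_1(n),
      T_2(n+1) = 36 T_2(n) + 2 T_0(n), T_3(n+1) = 136 T_3(n) + 24 T_1(n)
      for the power sums T_k(n), which solve to the closed forms of the theorem. *)

declare stern_poly.simps [simp del]

lemma stern_poly_0 [simp]: "stern_poly 0 = 0"
  by (subst stern_poly.simps) simp

lemma stern_poly_1 [simp]: "stern_poly (Suc 0) = 1"
  by (subst stern_poly.simps) simp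

lemma stern_poly_double: "n \<ge> 1 \<Longrightarrow> stern_poly (2 * n) = monom 1 1 * stern_poly n"
  by (subst stern_poly.simps) simp

lemma stern_poly_odd: "n \<ge> 1 \<Longrightarrow> stern_poly (2 * n + 1) = stern_poly n + stern_poly (n + 1)"
  by (subst stern_poly.simps) simp

lemma stern_cases:
  fixes n :: nat
  obtains "n = 0" | "n = 1" | m where "m \<ge> 1" "n = 2 * m" | m where "m \<ge> 1" "n = 2 * m + 1"
  by (metis One_nat_def evenE oddE less_one mult_0_right add_0 not_less)

text \<open>B_n has nonnegative coefficients, and is nonzero for n \<ge> 1.  Both facts are
  proved together since nonvanishing of B_(2m+1) uses nonnegativity of its summands.\<close>
lemma stern_poly_nonneg_nonzero:
  "(\<forall>i. coeff (stern_poly n) i \<ge> 0) \<and> (n \<ge> 1 \<longrightarrow> stern_poly n \<noteq> 0)"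
proof (induction n rule: less_induct)
  case (less n)
  show ?case
  proof (cases n rule: stern_cases)
    case (3 m)
    then show ?thesis using less[of m] by (auto simp: stern_poly_double coeff_monom_mult)
  next
    case (4 m)
    then have nonneg: "\<forall>i. coeff (stern_poly m) i \<ge> 0" "\<forall>i. coeff (stern_poly (m + 1)) i \<ge> 0"
      and nonzero: "stern_poly m \<noteq> 0"
      using less[of m] less[of "m + 1"] by auto
    have split: "stern_poly n = stern_poly m + stern_poly (m + 1)"
      using 4 stern_poly_odd by simp
    have "lead_coeff (stern_poly m) > 0"
      using nonneg nonzero by (smt (verit) leading_coeff_0_iff)
    then have "coeff (stern_poly n) (degree (stern_poly m)) > 0"
      using nonneg unfolding split coeff_add by (smt (verit))
    then have "stern_poly n \<noteq> 0" by auto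
    then show ?thesis using nonneg by (simp add: split)
  qed simp_all
qed

lemma stern_poly_nonneg: "coeff (stern_poly n) i \<ge> 0"
  using stern_poly_nonneg_nonzero by blast

lemma stern_poly_nonzero: "n \<ge> 1 \<Longrightarrow> stern_poly n \<noteq> 0"
  using stern_poly_nonneg_nonzero by blast

text \<open>Adding polynomials with nonnegative coefficients causes no cancellation of the
  leading terms, so the degree of the sum is the maximum of the degrees.\<close>
lemma degree_add_nonneg:
  fixes p q :: "'a :: linordered_idom poly"
  assumes "\<forall>i. coeff p i \<ge> 0" "\<forall>i. coeff q i \<ge> 0"
  shows "degree (p + q) = max (degree p) (degree q)"
proof -
  have left: "degree p \<le> degree (p + q)"
    if "\<forall>i. coeff p i \<ge> 0" "\<forall>i. coeff q i \<ge> 0" for p q :: "'a poly"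
  proof (cases "p = 0")
    case False
    then have "lead_coeff p > 0"
      using that(1) by (metis leading_coeff_0_iff order_le_less)
    then have "coeff (p + q) (degree p) \<noteq> 0"
      using that(2) by (metis add_pos_nonneg coeff_add less_irrefl)
    then show ?thesis by (rule le_degree)
  qed simp
  show ?thesis
    using left[OF assms] left[OF assms(2,1)]
    by (simp add: add.commute degree_add_le le_antisym)
qed

lemma stern_e_1 [simp]: "stern_e (Suc 0) = 0"
  by (simp add: stern_e_def)

lemma stern_e_double: "n \<ge> 1 \<Longrightarrow> stern_e (2 * n) = stern_e n + 1"
  using stern_poly_nonzero[of n]
  by (simp add: stern_e_def stern_poly_double degree_mult_eq degree_monom_eq)

lemma stern_e_odd: "n \<ge> 1 \<Longrightarrow> stern_e (2 * n + 1) = max (stern_e n) (stern_e (n + 1))"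
  using degree_add_nonneg[of "stern_poly n" "stern_poly (n + 1)"] stern_poly_odd[of n]
  by (simp add: stern_e_def stern_poly_nonneg)

lemma stern_e_Suc_close: "stern_e (Suc m) \<le> stern_e m + 1 \<and> stern_e m \<le> stern_e (Suc m) + 1"
proof (induction m rule: less_induct)
  case (less m)
  show ?case
  proof (cases m rule: stern_cases)
    case 1
    then show ?thesis by (simp add: stern_e_def)
  next
    case 2
    then show ?thesis using stern_e_double[of 1] by (simp add: numeral_2_eq_2)
  next
    case (3 k)
    then show ?thesis using stern_e_odd[of k] stern_e_double[of k] less[of k] by auto
  next
    case (4 k)
    then have "Suc m = 2 * (k + 1)" by simp
    then show ?thesis using 4 stern_e_odd[of k] stern_e_double[of "k + 1"] less[of k] by auto
  qed
qed

lemma stern_e_4a_plus_1: "a \<ge> 1 \<Longrightarrow> stern_e (4 * a + 1) = stern_e a + 1"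
proof -
  assume "a \<ge> 1"
  have "stern_e (4 * a + 1) = max (stern_e (2 * a)) (stern_e (2 * a + 1))"
    using stern_e_odd[of "2 * a"] \<open>a \<ge> 1\<close> by (simp add: mult.assoc)
  then show ?thesis
    using stern_e_double[of a] stern_e_odd[of a] stern_e_Suc_close[of a] \<open>a \<ge> 1\<close> by auto
qed

lemma stern_e_4a_minus_1: "a \<ge> 1 \<Longrightarrow> stern_e (4 * a - 1) = stern_e a + 1"
proof -
  assume "a \<ge> 1"
  define b where "b = a - 1"
  have b: "a = b + 1" using \<open>a \<ge> 1\<close> by (simp add: b_def)
  have "4 * a - 1 = 2 * (2 * b + 1) + 1" using b by simp
  then have "stern_e (4 * a - 1) = max (stern_e (2 * b + 1)) (stern_e (2 * b + 1 + 1))"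
    using stern_e_odd[of "2 * b + 1"] by (simp only: le_add2)
  also have "2 * b + 1 + 1 = 2 * a" using b by simp
  finally have "stern_e (4 * a - 1) = max (stern_e (2 * b + 1)) (stern_e (2 * a))" .
  moreover have "stern_e (2 * b + 1) \<le> stern_e a + 1"
  proof (cases "b = 0")
    case False
    then show ?thesis using stern_e_odd[of b] stern_e_Suc_close[of b] b by simp
  qed (simp add: b)
  ultimately show ?thesis using stern_e_double[OF \<open>a \<ge> 1\<close>] by simp
qed

lemma stern_e_parent:
  assumes "a \<ge> 2"
  obtains b where "b \<ge> 1" "a = 2 * b \<or> a = 4 * b + 1 \<or> a = 4 * b - 1" "stern_e a = stern_e b + 1"
proof -
  have "even a \<or> a mod 4 = 1 \<or> a mod 4 = 3" by presburger
  then consider "even a" | "a mod 4 = 1" | "a mod 4 = 3" by blast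
  then show ?thesis
  proof cases
    case 1
    then have "a = 2 * (a div 2)" "a div 2 \<ge> 1" using assms by auto
    then show ?thesis using that stern_e_double by metis
  next
    case 2
    then have "a = 4 * (a div 4) + 1" "a div 4 \<ge> 1" using assms by presburger+
    then show ?thesis using that stern_e_4a_plus_1 by metis
  next
    case 3
    then have "a = 4 * (a div 4 + 1) - 1" "a div 4 + 1 \<ge> 1" by presburger+
    then show ?thesis using that stern_e_4a_minus_1 by metis
  qed
qed

definition stern_level :: "nat \<Rightarrow> nat set" where
  "stern_level n = {a. a \<ge> 1 \<and> stern_e a = n}"

lemma stern_level_0: "stern_level 0 = {1}"
proof -
  have "a = 1" if "a \<ge> 1" "stern_e a = 0" for a
  proof (rule ccontr)
    assume "a \<noteq> 1"
    with that have "a \<ge> 2" by simp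
    then obtain b where "stern_e a = stern_e b + 1" by (rule stern_e_parent)
    with that show False by simp
  qed
  then show ?thesis unfolding stern_level_def by auto
qed

lemma stern_level_Suc:
  "stern_level (Suc n) =
     (\<lambda>a. 2 * a) ` stern_level n \<union> (\<lambda>a. 4 * a - 1) ` stern_level n \<union> (\<lambda>a. 4 * a + 1) ` stern_level n"
proof (intro equalityI subsetI)
  fix a assume "a \<in> stern_level (Suc n)"
  then have a: "a \<ge> 1" "stern_e a = Suc n" by (auto simp: stern_level_def)
  then have "a \<ge> 2" by (cases "a = 1") auto
  then obtain b where "b \<ge> 1" "a = 2 * b \<or> a = 4 * b + 1 \<or> a = 4 * b - 1" "stern_e a = stern_e b + 1"
    by (rule stern_e_parent)
  then show "a \<in> (\<lambda>a. 2 * a) ` stern_level n \<union> (\<lambda>a. 4 * a - 1) ` stern_level n \<union>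
                 (\<lambda>a. 4 * a + 1) ` stern_level n"
    using a by (auto simp: stern_level_def)
qed (use stern_e_double stern_e_4a_plus_1 stern_e_4a_minus_1 in \<open>auto simp: stern_level_def\<close>)

lemma finite_stern_level: "finite (stern_level n)"
  by (induction n) (auto simp: stern_level_0 stern_level_Suc)

text \<open>The three images in stern_level_Suc are pairwise disjoint (they live in different
  residue classes mod 4) and the maps are injective, so sums over the next level split.\<close>
lemma sum_stern_level_Suc:
  "(\<Sum>a\<in>stern_level (Suc n). f a) =
     (\<Sum>a\<in>stern_level n. f (2 * a) + f (4 * a - 1) + f (4 * a + 1))"
proof -
  let ?L = "stern_level n"
  have pos: "a \<ge> 1" if "a \<in> ?L" for a using that by (auto simp: stern_level_def)
  have inj: "inj_on (\<lambda>a::nat. 2 * a) ?L" "inj_on (\<lambda>a::nat. 4 * a - 1) ?L"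
    "inj_on (\<lambda>a::nat. 4 * a + 1) ?L"
    using pos by (auto simp: inj_on_def)
  have disj1: "(\<lambda>a. 2 * a) ` ?L \<inter> (\<lambda>a. 4 * a - 1) ` ?L = {}"
  proof (intro equals0I)
    fix x assume "x \<in> (\<lambda>a. 2 * a) ` ?L \<inter> (\<lambda>a. 4 * a - 1) ` ?L"
    then obtain a b where "x = 2 * a" "x = 4 * b - 1" "b \<ge> 1" using pos by blast
    then show False by presburger
  qed
  have disj2: "((\<lambda>a. 2 * a) ` ?L \<union> (\<lambda>a. 4 * a - 1) ` ?L) \<inter> (\<lambda>a. 4 * a + 1) ` ?L = {}"
    by (auto simp: image_iff) presburger+
  have "(\<Sum>a\<in>stern_level (Suc n). f a) =
          (\<Sum>a\<in>(\<lambda>a. 2 * a) ` ?L. f a) + (\<Sum>a\<in>(\<lambda>a. 4 * a - 1) ` ?L. f a) +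
          (\<Sum>a\<in>(\<lambda>a. 4 * a + 1) ` ?L. f a)"
    unfolding stern_level_Suc using disj1 disj2 finite_stern_level
    by (simp add: sum.union_disjoint)
  also have "\<dots> = (\<Sum>a\<in>?L. f (2 * a)) + (\<Sum>a\<in>?L. f (4 * a - 1)) + (\<Sum>a\<in>?L. f (4 * a + 1))"
    using inj by (simp add: sum.reindex)
  finally show ?thesis by (simp add: sum.distrib)
qed

definition stern_power_sum :: "nat \<Rightarrow> nat \<Rightarrow> real" where
  "stern_power_sum k n = (\<Sum>a\<in>stern_level n. real a ^ k)"

lemma stern_S_eq_power_sum: "real (stern_S k n) = stern_power_sum k n"
  unfolding stern_S_def stern_power_sum_def stern_level_def by simp

lemma stern_power_sum_0 [simp]: "stern_power_sum k 0 = 1"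
  by (simp add: stern_power_sum_def stern_level_0)

text \<open>Summation formula over the next level in real arithmetic, where 4a - 1 no longer
  involves truncated subtraction.\<close>
lemma stern_power_sum_Suc:
  "stern_power_sum k (Suc n) =
     (\<Sum>a\<in>stern_level n. (2 * real a) ^ k + (4 * real a - 1) ^ k + (4 * real a + 1) ^ k)"
  unfolding stern_power_sum_def sum_stern_level_Suc
  by (rule sum.cong) (auto simp: stern_level_def add.commute)

lemma stern_power_sum_recurrence:
  assumes "\<And>x::real. (2 * x) ^ k + (4 * x - 1) ^ k + (4 * x + 1) ^ k = c * x ^ k + d * x ^ j"
  shows "stern_power_sum k (Suc n) = c * stern_power_sum k n + d * stern_power_sum j n"
proof -
  have "stern_power_sum k (Suc n) = (\<Sum>a\<in>stern_level n. c * real a ^ k + d * real a ^ j)"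
    unfolding stern_power_sum_Suc using assms by (rule sum.cong[OF refl])
  also have "\<dots> = c * stern_power_sum k n + d * stern_power_sum j n"
    by (simp only: stern_power_sum_def sum.distrib sum_distrib_left)
  finally show ?thesis .
qed

lemma stern_power_sum_0_Suc: "stern_power_sum 0 (Suc n) = 3 * stern_power_sum 0 n"
  using stern_power_sum_recurrence[of 0 3 0 0] by simp

lemma stern_power_sum_1_Suc: "stern_power_sum 1 (Suc n) = 10 * stern_power_sum 1 n"
  using stern_power_sum_recurrence[of 1 10 0 0] by simp

lemma stern_power_sum_2_Suc:
  "stern_power_sum 2 (Suc n) = 36 * stern_power_sum 2 n + 2 * stern_power_sum 0 n"
  by (rule stern_power_sum_recurrence) (simp add: algebra_simps power2_eq_square)

lemma stern_power_sum_3_Suc: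
  "stern_power_sum 3 (Suc n) = 136 * stern_power_sum 3 n + 24 * stern_power_sum 1 n"
  by (rule stern_power_sum_recurrence) (simp add: algebra_simps power3_eq_cube)

lemma stern_power_sum_0_closed: "stern_power_sum 0 n = 3 ^ n"
  by (induction n) (simp_all add: stern_power_sum_0_Suc)

lemma stern_power_sum_1_closed: "stern_power_sum 1 n = 10 ^ n"
  by (induction n) (simp_all only: stern_power_sum_0 stern_power_sum_1_Suc power_0 power_Suc)

lemma stern_power_sum_2_closed: "stern_power_sum 2 n = (35 * 36 ^ n - 2 * 3 ^ n) / 33"
proof (induction n)
  case (Suc n)
  then show ?case
    by (simp only: stern_power_sum_2_Suc stern_power_sum_0_closed) (simp add: field_simps)
qed simp

lemma stern_power_sum_3_closed: "stern_power_sum 3 n = (25 * 136 ^ n - 4 * 10 ^ n) / 21"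
proof (induction n)
  case (Suc n)
  then show ?case
    by (simp only: stern_power_sum_3_Suc stern_power_sum_1_closed) (simp add: field_simps)
qed simp

theorem mainTheorem11:
  fixes n :: nat
  shows "real (stern_S 1 n) = 10 ^ n \<and>
         real (stern_S 2 n) = (35 * 36 ^ n - 2 * 3 ^ n) / 33 \<and>
         real (stern_S 3 n) = (25 * 136 ^ n - 4 * 10 ^ n) / 21"
  by (simp only: stern_S_eq_power_sum stern_power_sum_1_closed stern_power_sum_2_closed
      stern_power_sum_3_closed)

end
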